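(* Suppose the setting below, with $\mu_{f/h}>0$, and suppose there is a norm $\|\cdot\|$ on $\mathbb{R}^d$ such that $h$ is $\mu_h$-strongly convex with respect to $\|\cdot\|$ (equivalently $h^*$ is $\mu_h^{-1}$-smooth w.r.t. the dual norm) and each $f_i$ is $L_f$-smooth with respect to $\|\cdot\|$ (equivalently $f_i^*$ is $L_f^{-1}$-strongly convex w.r.t. the dual norm). Then Bregman-SAGA run with the constant step size $\eta_t=\frac{\mu_h}{8L_f}$ satisfies, for all $t\ge0$, $$\mathbb{E}[\psi_t]\le\Big(1-\min\big(\tfrac{\mu_h\mu_{f/h}}{8L_f},\tfrac{1}{2n}\big)\Big)^t\psi_0.$$
   Context: Let $C\subseteq\mathbb{R}^d$ be a closed convex set and $h:\mathbb{R}^d\to\mathbb{R}\cup\{+\infty\}$ a function satisfying the standing assumption: $h$ is twice continuously differentiable and strictly convex on $\operatorname{int} C$, and for every $y\in\mathbb{R}^d$ the problem $\min_{x\in C} h(x)-x^\top y$ has a unique solution, which lies in $\operatorname{int} C$. For differentiable $\varphi$, $D_\varphi(x,y)=\varphi(x)-\varphi(y)-\nabla\varphi(y)^\top(x-y)$. $f=\frac1n\sum_{i=1}^nf_i$ with each $f_i$ convex and $L_{f/h}$-relatively smooth w.r.t. $h$ (i.e. $D_{f_i}\le L_{f/h}D_h$), and $f$ is $\mu_{f/h}$-relatively strongly convex w.r.t. $h$ (i.e. $D_f\ge\mu_{f/h}D_h$), on $\operatorname{int}\operatorname{dom}h$. The minimizer $x^\star$ of $f$ over $C$ lies in $\operatorname{int}C$.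 Bregman-SAGA: set $\phi_i^0=x_0\in\operatorname{int}C$ for all $i$; at iteration $t$, pick $i_t$ uniformly in $\{1,\dots,n\}$, set $g_t=\nabla f_{i_t}(x_t)-\nabla f_{i_t}(\phi^t_{i_t})+\frac1n\sum_{j=1}^n\nabla f_j(\phi^t_j)$, $x_{t+1}=\arg\min_x\{\eta_tg_t^\top x+D_h(x,x_t)\}$, $\phi^{t+1}_{i_t}=x_t$, $\phi^{t+1}_j=\phi^t_j$ for $j\ne i_t$. $H_t=\frac1n\sum_{i=1}^nD_{f_i}(\phi_i^t,x^\star)$ and $\psi_t=\frac{1}{\eta_t}D_h(x^\star,x_t)+\frac n2H_t$. *)

theory Defs
  imports "HOL-Analysis.Analysis"
begin

definition is_norm :: "('a::real_vector \<Rightarrow> real) \<Rightarrow> bool" where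
  "is_norm N \<longleftrightarrow> (\<forall>x. 0 \<le> N x) \<and> (\<forall>x. N x = 0 \<longleftrightarrow> x = 0)
     \<and> (\<forall>c x. N (c *\<^sub>R x) = \<bar>c\<bar> * N x) \<and> (\<forall>x y. N (x + y) \<le> N x + N y)"

definition dual_norm :: "('a::real_inner \<Rightarrow> real) \<Rightarrow> 'a \<Rightarrow> real" where
  "dual_norm N g = (SUP x\<in>{x. N x \<le> 1}. g \<bullet> x)"

definition strict_convex_on :: "'a::real_vector set \<Rightarrow> ('a \<Rightarrow> real) \<Rightarrow> bool" where
  "strict_convex_on S f \<longleftrightarrow> convex S \<and> (\<forall>x\<in>S. \<forall>y\<in>S. \<forall>u::real. x \<noteq> y \<and> 0 < u \<and> u < 1
      \<longrightarrow> f (u *\<^sub>R x + (1 - u) *\<^sub>R y) < u * f x + (1 - u) * f y)"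

definition bregman :: "('a::real_inner \<Rightarrow> real) \<Rightarrow> ('a \<Rightarrow> 'a) \<Rightarrow> 'a \<Rightarrow> 'a \<Rightarrow> real" where
  "bregman phi gphi x y = phi x - phi y - gphi y \<bullet> (x - y)"

text \<open>Bregman divergence of the extended-valued h (values in R \<union> {+\<infinity>}),
  at a point y where h is finite and differentiable with gradient gh y.\<close>
definition bregman_ext :: "('a::real_inner \<Rightarrow> ereal) \<Rightarrow> ('a \<Rightarrow> 'a) \<Rightarrow> 'a \<Rightarrow> 'a \<Rightarrow> ereal" where
  "bregman_ext h gh x y = h x - ereal (real_of_ereal (h y) + gh y \<bullet> (x - y))"

text \<open>One Bregman-SAGA step with step size eta and sampled index i.
  State: (x_t, phi^t).  Indices range over {0..<n}.\<close>
definition saga_grad :: "nat \<Rightarrow> (nat \<Rightarrow> 'a \<Rightarrow> 'a::real_inner) \<Rightarrow> 'a \<times> (nat \<Rightarrow> 'a) \<Rightarrow> nat \<Rightarrow> 'a" where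
  "saga_grad n gf st i = gf i (fst st) - gf i (snd st i)
     + (1 / real n) *\<^sub>R (\<Sum>j<n. gf j (snd st j))"

definition saga_step :: "'a::real_inner set \<Rightarrow> ('a \<Rightarrow> ereal) \<Rightarrow> ('a \<Rightarrow> 'a) \<Rightarrow> nat
    \<Rightarrow> (nat \<Rightarrow> 'a \<Rightarrow> 'a) \<Rightarrow> real \<Rightarrow> 'a \<times> (nat \<Rightarrow> 'a) \<Rightarrow> nat \<Rightarrow> 'a \<times> (nat \<Rightarrow> 'a)" where
  "saga_step C h gh n gf eta st i =
     (let g = saga_grad n gf st i;
          obj = (\<lambda>z. ereal (eta * (g \<bullet> z)) + bregman_ext h gh z (fst st))
      in ((THE z. z \<in> C \<and> (\<forall>w\<in>C. obj z \<le> obj w)), (snd st)(i := fst st)))"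

definition saga_run :: "'a::real_inner set \<Rightarrow> ('a \<Rightarrow> ereal) \<Rightarrow> ('a \<Rightarrow> 'a) \<Rightarrow> nat
    \<Rightarrow> (nat \<Rightarrow> 'a \<Rightarrow> 'a) \<Rightarrow> real \<Rightarrow> 'a \<Rightarrow> nat list \<Rightarrow> 'a \<times> (nat \<Rightarrow> 'a)" where
  "saga_run C h gh n gf eta x0 is = foldl (saga_step C h gh n gf eta) (x0, (\<lambda>_. x0)) is"

definition saga_psi :: "('a::real_inner \<Rightarrow> real) \<Rightarrow> ('a \<Rightarrow> 'a) \<Rightarrow> nat \<Rightarrow> (nat \<Rightarrow> 'a \<Rightarrow> real)
    \<Rightarrow> (nat \<Rightarrow> 'a \<Rightarrow> 'a) \<Rightarrow> real \<Rightarrow> 'a \<Rightarrow> 'a \<times> (nat \<Rightarrow> 'a) \<Rightarrow> real" where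
  "saga_psi hr gh n f gf eta xstar st =
     (1 / eta) * bregman hr gh xstar (fst st)
     + real n / 2 * ((1 / real n) * (\<Sum>i<n. bregman (f i) (gf i) (snd st i) xstar))"

text \<open>Expectation of psi_t: i_0,...,i_{t-1} i.i.d. uniform on {0..<n}, i.e. the
  average over all n^t index sequences of length t.\<close>
definition saga_expected_psi :: "'a::real_inner set \<Rightarrow> ('a \<Rightarrow> ereal) \<Rightarrow> ('a \<Rightarrow> 'a) \<Rightarrow> nat
    \<Rightarrow> (nat \<Rightarrow> 'a \<Rightarrow> real) \<Rightarrow> (nat \<Rightarrow> 'a \<Rightarrow> 'a) \<Rightarrow> real \<Rightarrow> 'a \<Rightarrow> 'a \<Rightarrow> nat \<Rightarrow> real" where
  "saga_expected_psi C h gh n f gf eta x0 xstar t =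
     (\<Sum>is\<in>{is. length is = t \<and> set is \<subseteq> {..<n}}.
        saga_psi (\<lambda>x. real_of_ereal (h x)) gh n f gf eta xstar (saga_run C h gh n gf eta x0 is))
     / real n ^ t"

end

theory Submission
  imports Defs
begin

text \<open>The SAGA step is the mirror step x' = (grad h)^-1 (grad h x - eta g). By the three-point
  identity, D_h(x*, x') = D_h(x*, x) - eta <g, x - x*> + D_h(x, x'), and D_h(x, x') is a
  Fenchel-Young gap of h at the dual point grad h x - eta g: it is convex in that point and
  bounded by |.|_*^2 / (2 mu_h), since the conjugate of h is (1/mu_h)-smooth. Averaging over the
  sampled index, the inner product term yields n D_f(x*, x) >= n mu_{f/h} D_h(x*, x) by relative
  strong convexity, the summed gaps are at most eta/4 times the sum of D_{f_i}(x, x*) and D_{f_i}(phi_i, x*)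
  by co-coercivity of the f_i, and one of the n stored points is refreshed, which together
  contract psi by the factor 1 - min(eta mu_{f/h}, 1/(2n)).\<close>

section \<open>Norms and dual norms\<close>

lemma is_norm_nonneg: "is_norm N \<Longrightarrow> 0 \<le> N x"
  and is_norm_eq_0_iff: "is_norm N \<Longrightarrow> N x = 0 \<longleftrightarrow> x = 0"
  and is_norm_scaleR: "is_norm N \<Longrightarrow> N (c *\<^sub>R x) = \<bar>c\<bar> * N x"
  and is_norm_triangle: "is_norm N \<Longrightarrow> N (x + y) \<le> N x + N y"
  unfolding is_norm_def by auto

lemma is_norm_zero: "is_norm N \<Longrightarrow> N 0 = 0"
  by (simp add: is_norm_eq_0_iff)

lemma is_norm_minus: "is_norm N \<Longrightarrow> N (- x) = N x"
  using is_norm_scaleR[of N "-1" x] by simp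

lemma is_norm_pos: "is_norm N \<Longrightarrow> x \<noteq> 0 \<Longrightarrow> 0 < N x"
  using is_norm_nonneg is_norm_eq_0_iff by (metis less_eq_real_def)

lemma is_norm_sum_le:
  assumes "is_norm N"
  shows "N (\<Sum>i\<in>A. g i) \<le> (\<Sum>i\<in>A. N (g i))"
proof (induction A rule: infinite_finite_induct)
  case (insert a A)
  then show ?case using is_norm_triangle[OF assms, of "g a" "sum g A"] by simp
qed (simp_all add: is_norm_zero[OF assms])

lemma is_norm_le_norm:
  fixes N :: "'a::euclidean_space \<Rightarrow> real"
  assumes N: "is_norm N"
  shows "N v \<le> (\<Sum>b\<in>Basis. N b) * norm v"
proof -
  have "N v = N (\<Sum>b\<in>Basis. (v \<bullet> b) *\<^sub>R b)" by (simp add: euclidean_representation)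
  also have "\<dots> \<le> (\<Sum>b\<in>Basis. \<bar>v \<bullet> b\<bar> * N b)"
    using is_norm_sum_le[OF N, of "\<lambda>b. (v \<bullet> b) *\<^sub>R b" Basis] by (simp add: is_norm_scaleR[OF N])
  also have "\<dots> \<le> (\<Sum>b\<in>Basis. norm v * N b)"
    by (intro sum_mono mult_right_mono Basis_le_norm is_norm_nonneg[OF N])
  finally show ?thesis by (simp add: sum_distrib_left mult.commute)
qed

lemma is_norm_ge_norm:
  fixes N :: "'a::euclidean_space \<Rightarrow> real"
  assumes N: "is_norm N"
  obtains c where "c > 0" "\<And>v. c * norm v \<le> N v"
proof -
  define K where "K = (\<Sum>b\<in>Basis. N (b::'a))"
  have "K-lipschitz_on UNIV N"
  proof (rule lipschitz_onI)
    show "dist (N x) (N y) \<le> K * dist x y" for x y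
    proof -
      have "N x \<le> N y + N (x - y)" "N y \<le> N x + N (x - y)"
        using is_norm_triangle[OF N, of y "x - y"] is_norm_triangle[OF N, of x "y - x"]
          is_norm_minus[OF N, of "x - y"] by simp_all
      then show ?thesis using is_norm_le_norm[OF N, of "x - y"]
        unfolding K_def[symmetric] dist_real_def dist_norm by linarith
    qed
    show "0 \<le> K" unfolding K_def by (intro sum_nonneg is_norm_nonneg[OF N])
  qed
  then have "continuous_on (sphere 0 1) N"
    by (rule continuous_on_subset[OF lipschitz_on_continuous_on]) simp
  moreover have "sphere (0::'a) 1 \<noteq> {}" by simp
  ultimately obtain m where m: "m \<in> sphere 0 1" "\<And>y. y \<in> sphere 0 1 \<Longrightarrow> N m \<le> N y"
    using continuous_attains_inf[OF compact_sphere] by metis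
  have "m \<noteq> 0" using m(1) by auto
  then have "N m > 0" by (rule is_norm_pos[OF N])
  moreover have "N m * norm v \<le> N v" for v
  proof (cases "v = 0")
    case False
    have "N m \<le> N ((1 / norm v) *\<^sub>R v)" using m(2) False by simp
    then show ?thesis using False by (simp add: is_norm_scaleR[OF N] pos_le_divide_eq)
  qed (simp add: is_norm_zero[OF N])
  ultimately show ?thesis using that by blast
qed

lemma bdd_above_dual_norm:
  fixes N :: "'a::euclidean_space \<Rightarrow> real"
  assumes N: "is_norm N"
  shows "bdd_above ((\<lambda>x. g \<bullet> x) ` {x. N x \<le> 1})"
proof -
  obtain c where c: "c > 0" "\<And>v. c * norm v \<le> N v" using is_norm_ge_norm[OF N] by blast
  have "g \<bullet> x \<le> norm g / c" if "N x \<le> 1" for x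
  proof -
    have "norm x \<le> 1 / c" using c(2)[of x] that c(1) by (simp add: pos_le_divide_eq mult.commute)
    then have "norm g * norm x \<le> norm g / c" using mult_left_mono[of _ _ "norm g"] by fastforce
    then show ?thesis using Cauchy_Schwarz_ineq2[of g x] by (simp add: abs_le_iff)
  qed
  then show ?thesis by (auto simp: bdd_above_def)
qed

lemma inner_le_dual_norm_unit:
  fixes N :: "'a::euclidean_space \<Rightarrow> real"
  assumes N: "is_norm N" and "N x \<le> 1"
  shows "g \<bullet> x \<le> dual_norm N g"
  unfolding dual_norm_def using assms(2) by (intro cSUP_upper[OF _ bdd_above_dual_norm[OF N]]) simp

lemma dual_norm_nonneg:
  fixes N :: "'a::euclidean_space \<Rightarrow> real"
  assumes N: "is_norm N"
  shows "0 \<le> dual_norm N g"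
  using inner_le_dual_norm_unit[OF N, of 0 g] by (simp add: is_norm_zero[OF N])

lemma inner_le_dual_norm:
  fixes N :: "'a::euclidean_space \<Rightarrow> real"
  assumes N: "is_norm N"
  shows "g \<bullet> v \<le> dual_norm N g * N v"
proof (cases "v = 0")
  case False
  then have pos: "N v > 0" by (rule is_norm_pos[OF N])
  have "g \<bullet> ((1 / N v) *\<^sub>R v) \<le> dual_norm N g"
    using pos by (intro inner_le_dual_norm_unit[OF N]) (simp add: is_norm_scaleR[OF N])
  then show ?thesis using pos by (simp add: divide_le_eq mult.commute)
qed (simp add: is_norm_zero[OF N] dual_norm_nonneg[OF N])

lemma dual_norm_le:
  fixes N :: "'a::euclidean_space \<Rightarrow> real"
  assumes N: "is_norm N" and "\<And>x. N x \<le> 1 \<Longrightarrow> g \<bullet> x \<le> B"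
  shows "dual_norm N g \<le> B"
  unfolding dual_norm_def using assms(2) is_norm_zero[OF N]
  by (intro cSUP_least) (auto intro!: exI[of _ 0])

lemma dual_norm_scaleR:
  fixes N :: "'a::euclidean_space \<Rightarrow> real"
  assumes N: "is_norm N"
  shows "dual_norm N (c *\<^sub>R g) = \<bar>c\<bar> * dual_norm N g"
proof -
  have le: "dual_norm N (c *\<^sub>R g) \<le> \<bar>c\<bar> * dual_norm N g" for c g
  proof (rule dual_norm_le[OF N])
    fix x assume "N x \<le> 1"
    have "\<bar>g \<bullet> x\<bar> \<le> dual_norm N g * N x"
      using inner_le_dual_norm[OF N, of g x] inner_le_dual_norm[OF N, of g "- x"]
      by (simp add: is_norm_minus[OF N])
    also have "\<dots> \<le> dual_norm N g"
      using \<open>N x \<le> 1\<close> dual_norm_nonneg[OF N] mult_left_mono[of "N x" 1] by fastforce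
    finally have "c * (g \<bullet> x) \<le> \<bar>c\<bar> * dual_norm N g"
      by (metis abs_ge_self abs_mult abs_of_nonneg order.trans mult_left_mono abs_ge_zero)
    then show "(c *\<^sub>R g) \<bullet> x \<le> \<bar>c\<bar> * dual_norm N g" by simp
  qed
  show ?thesis
  proof (cases "c = 0")
    case False
    have "dual_norm N g = dual_norm N (inverse c *\<^sub>R (c *\<^sub>R g))" using False by simp
    also have "\<dots> \<le> \<bar>inverse c\<bar> * dual_norm N (c *\<^sub>R g)" by (rule le)
    finally have "\<bar>c\<bar> * dual_norm N g \<le> dual_norm N (c *\<^sub>R g)"
      using False by (simp add: field_simps)
    then show ?thesis using le[of c g] by simp
  qed (use le[of 0 g] dual_norm_nonneg[OF N, of 0] in simp)
qed

section \<open>Convex and smooth functions\<close>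

lemma bregman_three_point:
  assumes "gphi x' = gphi x - v"
  shows "bregman phi gphi z x' = bregman phi gphi z x - v \<bullet> (x - z) + bregman phi gphi x x'"
  unfolding bregman_def assms by (simp add: inner_diff_left inner_diff_right inner_commute)

lemma gradient_eq_0_at_interior_min:
  fixes f :: "'a::real_inner \<Rightarrow> real"
  assumes d: "(f has_derivative (\<lambda>v. g \<bullet> v)) (at x)"
    and x: "x \<in> interior S" and min: "\<And>y. y \<in> S \<Longrightarrow> f x \<le> f y"
  shows "g = 0"
proof -
  have "eventually (\<lambda>y. y \<in> interior S) (at x)"
    using x by (intro eventually_at_in_open') auto
  then have "eventually (\<lambda>y. f x \<le> f y) (at x)"
    by eventually_elim (use min interior_subset in blast)
  from has_derivative_local_min[OF d this] have "g \<bullet> g = 0" by metis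
  then show ?thesis by simp
qed

lemma convex_on_gradient_ineq:
  fixes f :: "'a::euclidean_space \<Rightarrow> real"
  assumes cv: "convex_on UNIV f" and d: "\<And>x. (f has_derivative (\<lambda>w. G x \<bullet> w)) (at x)"
  shows "f v + G v \<bullet> (z - v) \<le> f z"
proof -
  define k where "k t = f (v + t *\<^sub>R (z - v))" for t :: real
  have "convex_on UNIV k"
  proof (rule convex_onI)
    fix t x y :: real assume "t > 0" "t < 1"
    then show "k ((1 - t) *\<^sub>R x + t *\<^sub>R y) \<le> (1 - t) * k x + t * k y"
      using convex_onD[OF cv, of t "v + x *\<^sub>R (z - v)" "v + y *\<^sub>R (z - v)"]
      unfolding k_def by (simp add: algebra_simps)
  qed simp
  moreover have "(k has_field_derivative (G v \<bullet> (z - v))) (at 0)"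
  proof -
    have "((\<lambda>t. v + t *\<^sub>R (z - v)) has_derivative (\<lambda>t. t *\<^sub>R (z - v))) (at 0)"
      by (intro derivative_eq_intros) auto
    from has_derivative_compose[OF this d]
    show ?thesis unfolding k_def has_field_derivative_def
      by (rule has_derivative_eq_rhs) (simp add: fun_eq_iff mult.commute)
  qed
  ultimately have "k 1 - k 0 \<ge> G v \<bullet> (z - v) * (1 - 0)"
    by (intro convex_on_imp_above_tangent) auto
  then show ?thesis unfolding k_def by simp
qed

lemma bregman_nonneg:
  fixes f :: "'a::euclidean_space \<Rightarrow> real"
  assumes "convex_on UNIV f" and "\<And>x. (f has_derivative (\<lambda>w. G x \<bullet> w)) (at x)"
  shows "0 \<le> bregman f G u v"
  using convex_on_gradient_ineq[OF assms, of v u] unfolding bregman_def by simp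

lemma smooth_le_tangent_plus_quadratic:
  fixes f :: "'a::euclidean_space \<Rightarrow> real"
  assumes N: "is_norm N" and d: "\<And>x. (f has_derivative (\<lambda>w. G x \<bullet> w)) (at x)"
    and L: "\<And>x y. dual_norm N (G x - G y) \<le> L * N (x - y)"
  shows "f (x + e) \<le> f x + G x \<bullet> e + L / 2 * (N e)\<^sup>2"
proof -
  define k where "k s = f (x + s *\<^sub>R e) - s * (G x \<bullet> e) - L / 2 * s\<^sup>2 * (N e)\<^sup>2" for s :: real
  have "k 1 \<le> k 0"
  proof (rule DERIV_nonpos_imp_nonincreasing[of 0 1 k])
    fix s :: real assume s: "0 \<le> s" "s \<le> 1"
    have "((\<lambda>s. x + s *\<^sub>R e) has_derivative (\<lambda>t. t *\<^sub>R e)) (at s)"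
      by (intro derivative_eq_intros) auto
    from has_derivative_compose[OF this d]
    have "((\<lambda>s. f (x + s *\<^sub>R e)) has_derivative (\<lambda>t. t * (G (x + s *\<^sub>R e) \<bullet> e))) (at s)"
      by (rule has_derivative_eq_rhs) (simp add: fun_eq_iff)
    then have "(k has_derivative (\<lambda>t. (G (x + s *\<^sub>R e) \<bullet> e - G x \<bullet> e - L * s * (N e)\<^sup>2) * t)) (at s)"
      unfolding k_def
      by (auto intro!: derivative_eq_intros simp: fun_eq_iff power2_eq_square algebra_simps)
    then have "DERIV k s :> G (x + s *\<^sub>R e) \<bullet> e - G x \<bullet> e - L * s * (N e)\<^sup>2"
      by (simp add: has_field_derivative_def)
    moreover have "(G (x + s *\<^sub>R e) - G x) \<bullet> e \<le> L * s * (N e)\<^sup>2"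
    proof -
      have "(G (x + s *\<^sub>R e) - G x) \<bullet> e \<le> dual_norm N (G (x + s *\<^sub>R e) - G x) * N e"
        by (rule inner_le_dual_norm[OF N])
      also have "\<dots> \<le> L * N (s *\<^sub>R e) * N e"
        using L[of "x + s *\<^sub>R e" x] is_norm_nonneg[OF N, of e] by (simp add: mult_right_mono)
      also have "\<dots> = L * s * (N e)\<^sup>2" using s by (simp add: is_norm_scaleR[OF N] power2_eq_square)
      finally show ?thesis .
    qed
    ultimately show "\<exists>y. DERIV k s :> y \<and> y \<le> 0" by (auto simp: inner_diff_left)
  qed simp
  then show ?thesis unfolding k_def by simp
qed

text \<open>Co-coercivity: for a unit vector e and q = (G u - G v) \<bullet> e, compare the descent lemma
  at u - (q / L) e with the tangent bound at v.\<close>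
lemma dual_norm_gradient_diff_sq_le_bregman:
  fixes f :: "'a::euclidean_space \<Rightarrow> real"
  assumes N: "is_norm N" and d: "\<And>x. (f has_derivative (\<lambda>w. G x \<bullet> w)) (at x)"
    and L: "\<And>x y. dual_norm N (G x - G y) \<le> L * N (x - y)" and L0: "L > 0"
    and cv: "convex_on UNIV f"
  shows "(dual_norm N (G u - G v))\<^sup>2 \<le> 2 * L * bregman f G u v"
proof -
  define D where "D = bregman f G u v"
  have D0: "0 \<le> D" unfolding D_def by (rule bregman_nonneg[OF cv d])
  have "dual_norm N (G u - G v) \<le> sqrt (2 * L * D)"
  proof (rule dual_norm_le[OF N])
    fix e assume e: "N e \<le> 1"
    define q where "q = (G u - G v) \<bullet> e"
    show "(G u - G v) \<bullet> e \<le> sqrt (2 * L * D)"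
    proof (cases "q \<le> 0")
      case True then show ?thesis using q_def D0 L0 by (smt (verit) real_sqrt_ge_zero mult_nonneg_nonneg)
    next
      case False
      define dd where "dd = (- q / L) *\<^sub>R e"
      have "f v + G v \<bullet> (u + dd - v) \<le> f (u + dd)" by (rule convex_on_gradient_ineq[OF cv d])
      moreover have "f (u + dd) \<le> f u + G u \<bullet> dd + L / 2 * (N dd)\<^sup>2"
        by (rule smooth_le_tangent_plus_quadratic[OF N d L])
      ultimately have "0 \<le> D + (G u - G v) \<bullet> dd + L / 2 * (N dd)\<^sup>2"
        unfolding D_def bregman_def by (simp add: inner_diff_left inner_diff_right inner_add_right)
      moreover have "N dd \<le> q / L"
        using e False L0 mult_left_mono[of "N e" 1 "q / L"]
        unfolding dd_def is_norm_scaleR[OF N] by simp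
      then have "L / 2 * (N dd)\<^sup>2 \<le> L / 2 * (q / L)\<^sup>2"
        using L0 is_norm_nonneg[OF N, of dd] by (simp add: power_mono)
      moreover have "(G u - G v) \<bullet> dd = - q\<^sup>2 / L" unfolding dd_def q_def by (simp add: power2_eq_square)
      ultimately have "q\<^sup>2 \<le> 2 * L * D" using L0 by (simp add: field_simps power2_eq_square)
      then show ?thesis using False q_def by (simp add: real_le_rsqrt)
    qed
  qed
  then have "(dual_norm N (G u - G v))\<^sup>2 \<le> (sqrt (2 * L * D))\<^sup>2"
    using dual_norm_nonneg[OF N] by (intro power_mono) auto
  then show ?thesis using D0 L0 D_def by simp
qed

section \<open>The mirror map of a strongly convex function\<close>

locale strongly_convex_mirror_map =
  fixes C :: "'a::euclidean_space set" and h :: "'a \<Rightarrow> ereal" and gh :: "'a \<Rightarrow> 'a"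
    and N :: "'a \<Rightarrow> real" and mu :: real
  assumes h_range: "\<forall>x. h x \<noteq> -\<infinity>"
    and h_fin: "\<forall>x\<in>interior C. h x \<noteq> \<infinity>"
    and h_grad: "\<forall>x\<in>interior C.
        ((\<lambda>y. real_of_ereal (h y)) has_derivative (\<lambda>v. gh x \<bullet> v)) (at x)"
    and h_mirror: "\<forall>y. \<exists>!x. x \<in> C \<and> (\<forall>z\<in>C. h x - ereal (x \<bullet> y) \<le> h z - ereal (z \<bullet> y))"
    and h_mirror_int: "\<forall>y x. x \<in> C \<and> (\<forall>z\<in>C. h x - ereal (x \<bullet> y) \<le> h z - ereal (z \<bullet> y))
        \<longrightarrow> x \<in> interior C"
    and N: "is_norm N"
    and mu: "mu > 0"
    and h_sc: "\<forall>x\<in>interior C. \<forall>y\<in>interior C.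
        real_of_ereal (h y) \<ge> real_of_ereal (h x) + gh x \<bullet> (y - x) + mu / 2 * (N (y - x))\<^sup>2"
begin

abbreviation hr :: "'a \<Rightarrow> real" where "hr x \<equiv> real_of_ereal (h x)"

definition mirror :: "'a \<Rightarrow> 'a" where
  "mirror z = (THE x. x \<in> C \<and> (\<forall>w\<in>C. h x - ereal (x \<bullet> z) \<le> h w - ereal (w \<bullet> z)))"

text \<open>The convex conjugate of h; the supremum defining it is attained at mirror z.\<close>
definition hconj :: "'a \<Rightarrow> real" where
  "hconj z = mirror z \<bullet> z - hr (mirror z)"

definition fenchel_young_gap :: "'a \<Rightarrow> 'a \<Rightarrow> real" where
  "fenchel_young_gap x z = hconj z + hr x - x \<bullet> z"

lemma mirror_minimizes: "mirror z \<in> C \<and> (\<forall>w\<in>C. h (mirror z) - ereal (mirror z \<bullet> z) \<le> h w - ereal (w \<bullet> z))"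
  unfolding mirror_def using theI'[OF h_mirror[rule_format, of z]] .

lemma mirror_in_interior: "mirror z \<in> interior C"
  using mirror_minimizes h_mirror_int by blast

lemma h_eq_ereal: "x \<in> interior C \<Longrightarrow> h x = ereal (hr x)"
  using h_range h_fin by (cases "h x") auto

lemma mirror_le:
  assumes w: "w \<in> interior C"
  shows "hr (mirror z) - mirror z \<bullet> z \<le> hr w - w \<bullet> z"
proof -
  have "h (mirror z) - ereal (mirror z \<bullet> z) \<le> h w - ereal (w \<bullet> z)"
    using mirror_minimizes w interior_subset by blast
  then have "ereal (hr (mirror z)) - ereal (mirror z \<bullet> z) \<le> ereal (hr w) - ereal (w \<bullet> z)"
    by (subst (asm) h_eq_ereal[OF w], subst (asm) h_eq_ereal[OF mirror_in_interior])
  then show ?thesis by simp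
qed

lemma gh_mirror: "gh (mirror z) = z"
proof -
  have "((\<lambda>w. hr w - w \<bullet> z) has_derivative (\<lambda>v. (gh (mirror z) - z) \<bullet> v)) (at (mirror z))"
    using h_grad mirror_in_interior
    by (auto intro!: derivative_eq_intros simp: fun_eq_iff inner_diff_right inner_commute)
  then have "gh (mirror z) - z = 0"
    by (rule gradient_eq_0_at_interior_min[where S="interior C"]) (auto simp: mirror_in_interior mirror_le)
  then show ?thesis by simp
qed

lemma hconj_ge: "w \<in> interior C \<Longrightarrow> w \<bullet> z - hr w \<le> hconj z"
  unfolding hconj_def using mirror_le[of w z] by simp

lemma convex_hconj: "convex_on UNIV hconj"
proof (rule convex_onI)
  fix t :: real and p q assume t: "0 < t" "t < 1"
  let ?m = "mirror ((1 - t) *\<^sub>R p + t *\<^sub>R q)"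
  have "hconj ((1 - t) *\<^sub>R p + t *\<^sub>R q) = (1 - t) * (?m \<bullet> p - hr ?m) + t * (?m \<bullet> q - hr ?m)"
    unfolding hconj_def by (simp add: inner_add_right algebra_simps)
  also have "\<dots> \<le> (1 - t) * hconj p + t * hconj q"
    using hconj_ge[OF mirror_in_interior] t by (intro add_mono mult_left_mono) auto
  finally show "hconj ((1 - t) *\<^sub>R p + t *\<^sub>R q) \<le> (1 - t) * hconj p + t * hconj q" .
qed simp

lemma bregman_h_ge:
  "x \<in> interior C \<Longrightarrow> y \<in> interior C \<Longrightarrow> mu / 2 * (N (y - x))\<^sup>2 \<le> bregman hr gh y x"
  unfolding bregman_def using h_sc by force

lemma bregman_h_nonneg:
  assumes "x \<in> interior C" "y \<in> interior C"
  shows "0 \<le> bregman hr gh y x"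
proof -
  have "0 \<le> mu / 2 * (N (y - x))\<^sup>2" using mu by simp
  then show ?thesis using bregman_h_ge[OF assms] by linarith
qed

lemma bregman_h_le:
  assumes x: "x \<in> interior C" and x': "x' \<in> interior C"
  shows "bregman hr gh x x' \<le> (dual_norm N (gh x' - gh x))\<^sup>2 / (2 * mu)"
proof -
  define K where "K = dual_norm N (gh x' - gh x)"
  define r where "r = N (x' - x)"
  have "bregman hr gh x x' + bregman hr gh x' x = (gh x' - gh x) \<bullet> (x' - x)"
    unfolding bregman_def by (simp add: inner_diff_left inner_diff_right)
  also have "\<dots> \<le> K * r" unfolding K_def r_def by (rule inner_le_dual_norm[OF N])
  finally have "bregman hr gh x x' \<le> K * r - mu / 2 * r\<^sup>2"
    using bregman_h_ge[OF x x'] unfolding r_def by linarith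
  also have "\<dots> \<le> K\<^sup>2 / (2 * mu)"
    using mu zero_le_power2[of "K - mu * r"] by (simp add: field_simps power2_eq_square)
  finally show ?thesis unfolding K_def .
qed

lemma fenchel_young_gap_eq_bregman: "fenchel_young_gap x z = bregman hr gh x (mirror z)"
  unfolding fenchel_young_gap_def hconj_def bregman_def gh_mirror
  by (simp add: inner_diff_right inner_commute)

lemma hconj_le_tangent_plus_quadratic:
  "hconj z' \<le> hconj z + mirror z \<bullet> (z' - z) + (dual_norm N (z' - z))\<^sup>2 / (2 * mu)"
proof -
  have "hconj z' - hconj z - mirror z \<bullet> (z' - z) = bregman hr gh (mirror z) (mirror z')"
    unfolding hconj_def bregman_def gh_mirror by (simp add: inner_diff_left inner_diff_right inner_commute)
  also have "\<dots> \<le> (dual_norm N (z' - z))\<^sup>2 / (2 * mu)"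
    using bregman_h_le[OF mirror_in_interior mirror_in_interior] by (simp add: gh_mirror)
  finally show ?thesis by simp
qed

lemma fenchel_young_gap_midpoint:
  "fenchel_young_gap x ((1/2) *\<^sub>R z + (1/2) *\<^sub>R z') \<le> (fenchel_young_gap x z + fenchel_young_gap x z') / 2"
  using convex_onD[OF convex_hconj, of "1/2" z z']
  by (simp add: fenchel_young_gap_def inner_add_right field_simps)

lemma fenchel_young_gap_le:
  "x \<in> interior C \<Longrightarrow> fenchel_young_gap x (gh x + u) \<le> (dual_norm N u)\<^sup>2 / (2 * mu)"
  using bregman_h_le[OF _ mirror_in_interior, of x "gh x + u"]
  by (simp add: fenchel_young_gap_eq_bregman gh_mirror)

text \<open>Variance bound: expand each term by smoothness of hconj at the common point
  w = gh x - Y_bar; the linear terms then add up to -|I| D_h(mirror w, x), which is nonpositive.\<close>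
lemma sum_fenchel_young_gap_centered_le:
  fixes Y :: "'b \<Rightarrow> 'a"
  assumes x: "x \<in> interior C" and I: "finite I" "I \<noteq> {}"
  defines "Ybar \<equiv> (1 / real (card I)) *\<^sub>R (\<Sum>j\<in>I. Y j)"
  shows "(\<Sum>i\<in>I. fenchel_young_gap x (gh x + (Y i - Ybar)))
    \<le> (\<Sum>i\<in>I. (dual_norm N (Y i))\<^sup>2 / (2 * mu))"
proof -
  define w where "w = gh x - Ybar"
  define c where "c = hconj w + hr x - x \<bullet> w"
  have "(\<Sum>i\<in>I. fenchel_young_gap x (gh x + (Y i - Ybar)))
      \<le> (\<Sum>i\<in>I. c + (mirror w - x) \<bullet> Y i + (dual_norm N (Y i))\<^sup>2 / (2 * mu))"
  proof (rule sum_mono)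
    fix i
    have "fenchel_young_gap x (gh x + (Y i - Ybar)) = hconj (w + Y i) + hr x - x \<bullet> (w + Y i)"
      unfolding fenchel_young_gap_def w_def by (simp add: algebra_simps)
    then show "fenchel_young_gap x (gh x + (Y i - Ybar))
        \<le> c + (mirror w - x) \<bullet> Y i + (dual_norm N (Y i))\<^sup>2 / (2 * mu)"
      using hconj_le_tangent_plus_quadratic[of "w + Y i" w]
      by (simp add: fenchel_young_gap_def c_def inner_add_right inner_diff_left)
  qed
  also have "\<dots> = real (card I) * c + (mirror w - x) \<bullet> (\<Sum>i\<in>I. Y i) + (\<Sum>i\<in>I. (dual_norm N (Y i))\<^sup>2 / (2 * mu))"
    by (simp add: sum.distrib inner_sum_right)
  also have "(\<Sum>i\<in>I. Y i) = real (card I) *\<^sub>R Ybar"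
    using I by (simp add: Ybar_def)
  also have "real (card I) * c + (mirror w - x) \<bullet> (real (card I) *\<^sub>R Ybar)
      = real (card I) * (c + (mirror w - x) \<bullet> Ybar)"
    by (simp add: algebra_simps)
  also have "c + (mirror w - x) \<bullet> Ybar = - bregman hr gh (mirror w) x"
    unfolding c_def hconj_def bregman_def w_def
    by (simp add: inner_diff_left inner_diff_right inner_commute)
  also have "real (card I) * (- bregman hr gh (mirror w) x) \<le> 0"
    using bregman_h_nonneg[OF x mirror_in_interior] by (simp add: mult_nonneg_nonneg)
  finally show ?thesis by simp
qed

end

section \<open>Bregman-SAGA\<close>

lemma sum_fun_upd_eq:
  fixes G :: "'i \<Rightarrow> 'b \<Rightarrow> 'c::ab_group_add"
  assumes "finite A" "i \<in> A"
  shows "(\<Sum>j\<in>A. G j ((ph(i := x)) j)) = (\<Sum>j\<in>A. G j (ph j)) - G i (ph i) + G i x"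
proof -
  have "(\<Sum>j\<in>A - {i}. G j ((ph(i := x)) j)) = (\<Sum>j\<in>A - {i}. G j (ph j))"
    by (rule sum.cong) auto
  then show ?thesis
    using sum.remove[OF assms, of "\<lambda>j. G j ((ph(i := x)) j)"] sum.remove[OF assms, of "\<lambda>j. G j (ph j)"]
    by (simp add: algebra_simps)
qed

locale bregman_saga = strongly_convex_mirror_map C h gh N mu
  for C :: "'a::euclidean_space set" and h gh N mu +
  fixes n :: nat and f :: "nat \<Rightarrow> 'a \<Rightarrow> real" and gf :: "nat \<Rightarrow> 'a \<Rightarrow> 'a"
    and mu_rel L :: real and xstar :: 'a
  assumes n: "n \<ge> 1"
    and f_grad: "\<forall>i<n. \<forall>x. (f i has_derivative (\<lambda>v. gf i x \<bullet> v)) (at x)"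
    and f_convex: "\<forall>i<n. convex_on UNIV (f i)"
    and rel_sc: "\<forall>x\<in>interior C. \<forall>y\<in>interior C.
        bregman (\<lambda>x. (\<Sum>i<n. f i x) / real n) (\<lambda>x. (1 / real n) *\<^sub>R (\<Sum>i<n. gf i x)) x y
          \<ge> mu_rel * bregman (\<lambda>x. real_of_ereal (h x)) gh x y"
    and mu_rel: "mu_rel > 0"
    and xstar: "xstar \<in> interior C" "\<forall>x\<in>C. (\<Sum>i<n. f i xstar) / real n \<le> (\<Sum>i<n. f i x) / real n"
    and L: "L > 0"
    and f_smooth: "\<forall>i<n. \<forall>x y. dual_norm N (gf i x - gf i y) \<le> L * N (x - y)"
begin

definition eta :: real where "eta = mu / (8 * L)"

definition rho :: real where "rho = min (mu * mu_rel / (8 * L)) (1 / (2 * real n))"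

abbreviation Df :: "nat \<Rightarrow> 'a \<Rightarrow> real" where "Df i u \<equiv> bregman (f i) (gf i) u xstar"

abbreviation psi :: "'a \<times> (nat \<Rightarrow> 'a) \<Rightarrow> real" where
  "psi \<equiv> saga_psi hr gh n f gf eta xstar"

abbreviation step :: "'a \<times> (nat \<Rightarrow> 'a) \<Rightarrow> nat \<Rightarrow> 'a \<times> (nat \<Rightarrow> 'a)" where
  "step \<equiv> saga_step C h gh n gf eta"

lemma eta_pos: "eta > 0"
  unfolding eta_def using mu L by simp

lemma rho_le_eta_mu_rel: "rho \<le> eta * mu_rel"
  unfolding rho_def eta_def by simp

lemma rho_le_inverse_2n: "rho \<le> 1 / (2 * real n)"
  unfolding rho_def by simp

lemma n_rho_le: "real n * rho \<le> 1 / 2"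
  using mult_left_mono[OF rho_le_inverse_2n, of "real n"] n by simp

lemma rho_le_1: "rho \<le> 1"
proof -
  have "1 / (2 * real n) \<le> 1" using n by (simp add: field_simps)
  then show ?thesis using rho_le_inverse_2n by linarith
qed

lemma sum_gf_xstar_eq_0: "(\<Sum>i<n. gf i xstar) = 0"
proof -
  have "((\<lambda>x. (\<Sum>i<n. f i x) / real n) has_derivative
      (\<lambda>v. ((1 / real n) *\<^sub>R (\<Sum>i<n. gf i xstar)) \<bullet> v)) (at xstar)"
    using f_grad by (auto intro!: derivative_eq_intros simp: inner_sum_left sum_divide_distrib)
  then have "(1 / real n) *\<^sub>R (\<Sum>i<n. gf i xstar) = 0"
    by (rule gradient_eq_0_at_interior_min[where S=C]) (use xstar in auto)
  then show ?thesis using n by simp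
qed

lemma Df_nonneg: "i < n \<Longrightarrow> 0 \<le> Df i u"
  using bregman_nonneg[of "f i" "gf i"] f_convex f_grad by auto

lemma dual_norm_gf_diff_sq_le: "i < n \<Longrightarrow> (dual_norm N (gf i u - gf i xstar))\<^sup>2 \<le> 2 * L * Df i u"
  using dual_norm_gradient_diff_sq_le_bregman[OF N _ _ L, of "f i" "gf i"] f_grad f_smooth f_convex
  by auto

text \<open>Up to the constant gh x \<bullet> x - hr x, the objective of the step is h z - z \<bullet> y with
  y = gh x - eta g, so the step is the mirror image of y.\<close>
lemma saga_step_eq:
  assumes x: "x \<in> interior C"
  shows "step (x, ph) i = (mirror (gh x - eta *\<^sub>R saga_grad n gf (x, ph) i), ph(i := x))"
proof -
  define g where "g = saga_grad n gf (x, ph) i"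
  define y where "y = gh x - eta *\<^sub>R g"
  define obj where "obj z = ereal (eta * (g \<bullet> z)) + bregman_ext h gh z x" for z
  have obj_eq: "obj z = (h z - ereal (z \<bullet> y)) + ereal (gh x \<bullet> x - hr x)" for z
    using h_range unfolding obj_def bregman_ext_def y_def
    by (cases "h z") (simp_all add: inner_diff_left inner_diff_right inner_commute algebra_simps)
  have obj_le_iff: "obj z \<le> obj w \<longleftrightarrow> h z - ereal (z \<bullet> y) \<le> h w - ereal (w \<bullet> y)" for z w
    using h_range unfolding obj_eq by (cases "h z"; cases "h w") auto
  have "(THE z. z \<in> C \<and> (\<forall>w\<in>C. obj z \<le> obj w)) = mirror y"
    unfolding mirror_def obj_le_iff ..
  then show ?thesis unfolding saga_step_def Let_def g_def[symmetric] y_def by (simp add: obj_def)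
qed

lemma saga_grad_centered:
  "saga_grad n gf (x, ph) i = (gf i x - gf i xstar) - (gf i (ph i) - gf i xstar)
     + (1 / real n) *\<^sub>R (\<Sum>j<n. gf j (ph j) - gf j xstar)"
  unfolding saga_grad_def by (simp add: sum_subtractf sum_gf_xstar_eq_0)

lemma sum_saga_grad: "(\<Sum>i<n. saga_grad n gf (x, ph) i) = (\<Sum>i<n. gf i x)"
  using n unfolding saga_grad_def by (simp add: sum.distrib sum_subtractf sum_constant_scaleR)


text \<open>Variance bound: the SAGA direction is the midpoint of a full gradient difference and a
  centred sample of the stored gradient differences, each controlled by co-coercivity.\<close>
lemma sum_fenchel_young_gap_saga_le:
  assumes x: "x \<in> interior C"
  shows "(\<Sum>i<n. fenchel_young_gap x (gh x - eta *\<^sub>R saga_grad n gf (x, ph) i))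
    \<le> eta / 4 * ((\<Sum>i<n. Df i x) + (\<Sum>i<n. Df i (ph i)))"
proof -
  define a where "a i = gf i x - gf i xstar" for i
  define b where "b i = gf i (ph i) - gf i xstar" for i
  define Y where "Y i = (2 * eta) *\<^sub>R b i" for i
  define Ybar where "Ybar = (1 / real (card {..<n})) *\<^sub>R (\<Sum>j<n. Y j)"
  have halves: "(1/2::real) *\<^sub>R v + (1/2) *\<^sub>R v = v" for v :: 'a
    using scaleR_left_distrib[of "1/2" "1/2" v, symmetric] by simp
  have split: "gh x - eta *\<^sub>R saga_grad n gf (x, ph) i
      = (1/2) *\<^sub>R (gh x + (- (2 * eta)) *\<^sub>R a i) + (1/2) *\<^sub>R (gh x + (Y i - Ybar))" for i
    unfolding saga_grad_centered a_def b_def Y_def Ybar_def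
    by (simp add: algebra_simps scaleR_sum_right halves)
  have "(\<Sum>i<n. fenchel_young_gap x (gh x - eta *\<^sub>R saga_grad n gf (x, ph) i))
      \<le> ((\<Sum>i<n. fenchel_young_gap x (gh x + (- (2 * eta)) *\<^sub>R a i))
         + (\<Sum>i<n. fenchel_young_gap x (gh x + (Y i - Ybar)))) / 2"
    unfolding split sum.distrib[symmetric] sum_divide_distrib by (intro sum_mono fenchel_young_gap_midpoint)
  also have "\<dots> \<le> ((\<Sum>i<n. (dual_norm N ((- (2 * eta)) *\<^sub>R a i))\<^sup>2 / (2 * mu))
         + (\<Sum>i<n. (dual_norm N (Y i))\<^sup>2 / (2 * mu))) / 2"
  proof -
    have "(\<Sum>i<n. fenchel_young_gap x (gh x + (Y i - Ybar))) \<le> (\<Sum>i<n. (dual_norm N (Y i))\<^sup>2 / (2 * mu))"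
      using n unfolding Ybar_def by (intro sum_fenchel_young_gap_centered_le[OF x]) (auto simp: lessThan_empty_iff)
    then show ?thesis by (intro divide_right_mono add_mono[OF sum_mono] fenchel_young_gap_le[OF x]) auto
  qed
  also have "\<dots> = eta\<^sup>2 / mu * (\<Sum>i<n. (dual_norm N (a i))\<^sup>2 + (dual_norm N (b i))\<^sup>2)"
  proof -
    have sq: "(dual_norm N (c *\<^sub>R v))\<^sup>2 / (2 * mu) = c\<^sup>2 / (2 * mu) * (dual_norm N v)\<^sup>2" for c v
      by (simp add: dual_norm_scaleR[OF N] power_mult_distrib)
    show ?thesis
      unfolding Y_def sq sum_distrib_left[symmetric] sum.distrib using mu by (simp add: field_simps)
  qed
  also have "\<dots> \<le> eta\<^sup>2 / mu * (\<Sum>i<n. 2 * L * Df i x + 2 * L * Df i (ph i))"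
    unfolding a_def b_def using mu
    by (intro mult_left_mono sum_mono add_mono dual_norm_gf_diff_sq_le) auto
  also have "\<dots> = eta / 4 * ((\<Sum>i<n. Df i x) + (\<Sum>i<n. Df i (ph i)))"
    unfolding eta_def using mu L
    by (simp add: sum.distrib sum_distrib_left[symmetric] field_simps power2_eq_square)
  finally show ?thesis .
qed

lemma saga_psi_eq: "psi (x, ph) = bregman hr gh xstar x / eta + (\<Sum>i<n. Df i (ph i)) / 2"
  using n unfolding saga_psi_def by simp

lemma saga_psi_step:
  fixes ph :: "nat \<Rightarrow> 'a"
  assumes x: "x \<in> interior C" and i: "i < n"
  defines "g \<equiv> saga_grad n gf (x, ph) i"
  shows "psi (step (x, ph) i) = psi (x, ph) - g \<bullet> (x - xstar)
     + fenchel_young_gap x (gh x - eta *\<^sub>R g) / eta + (Df i x - Df i (ph i)) / 2"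
proof -
  define x' where "x' = mirror (gh x - eta *\<^sub>R g)"
  have "bregman hr gh xstar x' = bregman hr gh xstar x - (eta *\<^sub>R g) \<bullet> (x - xstar) + bregman hr gh x x'"
    by (rule bregman_three_point) (simp add: x'_def gh_mirror)
  moreover have "bregman hr gh x x' = fenchel_young_gap x (gh x - eta *\<^sub>R g)"
    by (simp add: x'_def fenchel_young_gap_eq_bregman)
  ultimately have "bregman hr gh xstar x' / eta
      = bregman hr gh xstar x / eta - g \<bullet> (x - xstar) + fenchel_young_gap x (gh x - eta *\<^sub>R g) / eta"
    using eta_pos by (simp add: field_simps)
  moreover have "(\<Sum>j<n. Df j ((ph(i := x)) j)) = (\<Sum>j<n. Df j (ph j)) - Df i (ph i) + Df i x"
    using i by (intro sum_fun_upd_eq) auto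
  ultimately show ?thesis
    unfolding saga_step_eq[OF x] saga_psi_eq g_def[symmetric] x'_def[symmetric] by simp
qed

lemma inner_sum_gf_ge:
  assumes x: "x \<in> interior C"
  shows "real n * mu_rel * bregman hr gh xstar x + (\<Sum>i<n. Df i x) \<le> (\<Sum>i<n. gf i x) \<bullet> (x - xstar)"
proof -
  define BF where "BF = bregman (\<lambda>x. (\<Sum>i<n. f i x) / real n) (\<lambda>x. (1 / real n) *\<^sub>R (\<Sum>i<n. gf i x)) xstar x"
  have "mu_rel * bregman hr gh xstar x \<le> BF"
    unfolding BF_def using rel_sc x xstar(1) by auto
  moreover have "real n * BF + (\<Sum>i<n. Df i x) = (\<Sum>i<n. gf i x) \<bullet> (x - xstar)"
  proof -
    have "real n * BF = (\<Sum>i<n. f i xstar) - (\<Sum>i<n. f i x) - (\<Sum>i<n. gf i x) \<bullet> (xstar - x)"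
      using n by (simp add: BF_def bregman_def field_simps)
    moreover have "(\<Sum>i<n. Df i x) = (\<Sum>i<n. f i x) - (\<Sum>i<n. f i xstar)"
      by (simp add: bregman_def sum_subtractf inner_sum_left[symmetric] sum_gf_xstar_eq_0)
    ultimately show ?thesis by (simp add: inner_diff_right)
  qed
  ultimately show ?thesis using n by (smt (verit) mult_left_mono of_nat_0_le_iff mult.assoc)
qed

lemma n_rho_psi_le:
  assumes x: "x \<in> interior C"
  shows "real n * rho * psi (x, ph) \<le> real n * mu_rel * bregman hr gh xstar x + (\<Sum>i<n. Df i (ph i)) / 4"
proof -
  define Dh where "Dh = bregman hr gh xstar x"
  define S where "S = (\<Sum>i<n. Df i (ph i))"
  have "0 \<le> Dh" unfolding Dh_def by (rule bregman_h_nonneg[OF x xstar(1)])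
  then have "rho * (Dh / eta) \<le> mu_rel * Dh"
    using mult_right_mono[OF rho_le_eta_mu_rel] eta_pos by (simp add: field_simps)
  then have "real n * rho * (Dh / eta) \<le> real n * mu_rel * Dh"
    using mult_left_mono[of "rho * (Dh / eta)" "mu_rel * Dh" "real n"] by (simp add: mult.assoc)
  moreover have "0 \<le> S" unfolding S_def by (intro sum_nonneg Df_nonneg) simp
  then have "real n * rho * (S / 2) \<le> S / 4"
    using mult_right_mono[OF n_rho_le, of "S / 2"] by simp
  moreover have "real n * rho * psi (x, ph) = real n * rho * (Dh / eta) + real n * rho * (S / 2)"
    unfolding saga_psi_eq Dh_def S_def by (simp add: algebra_simps)
  ultimately show ?thesis unfolding Dh_def S_def by linarith
qed

lemma saga_one_step:
  assumes x: "x \<in> interior C"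
  shows "(\<Sum>i<n. psi (step (x, ph) i)) \<le> real n * (1 - rho) * psi (x, ph)"
proof -
  define Dh where "Dh = bregman hr gh xstar x"
  define A where "A = (\<Sum>i<n. Df i x)"
  define S where "S = (\<Sum>i<n. Df i (ph i))"
  define V where "V = (\<Sum>i<n. fenchel_young_gap x (gh x - eta *\<^sub>R saga_grad n gf (x, ph) i))"
  have "(\<Sum>i<n. psi (step (x, ph) i)) = (\<Sum>i<n. psi (x, ph) - saga_grad n gf (x, ph) i \<bullet> (x - xstar)
      + fenchel_young_gap x (gh x - eta *\<^sub>R saga_grad n gf (x, ph) i) / eta + (Df i x - Df i (ph i)) / 2)"
    by (rule sum.cong) (simp_all add: saga_psi_step[OF x])
  also have "\<dots> = real n * psi (x, ph) - (\<Sum>i<n. gf i x) \<bullet> (x - xstar) + V / eta + (A - S) / 2"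
    unfolding sum.distrib sum_subtractf sum_divide_distrib[symmetric] inner_sum_left[symmetric]
      sum_saga_grad V_def A_def S_def
    by simp
  also have "\<dots> \<le> real n * psi (x, ph) - real n * mu_rel * Dh - A + (A + S) / 4 + (A - S) / 2"
  proof -
    have "V / eta \<le> (A + S) / 4"
      using sum_fenchel_young_gap_saga_le[OF x, of ph] eta_pos
      unfolding V_def A_def S_def by (simp add: field_simps)
    then show ?thesis using inner_sum_gf_ge[OF x] unfolding Dh_def A_def by linarith
  qed
  also have "\<dots> \<le> real n * (1 - rho) * psi (x, ph)"
  proof -
    have "real n * (1 - rho) * psi (x, ph) = real n * psi (x, ph) - real n * rho * psi (x, ph)"
      by (simp add: algebra_simps)
    moreover have "0 \<le> A" unfolding A_def by (intro sum_nonneg Df_nonneg) simp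
    ultimately show ?thesis using n_rho_psi_le[OF x, of ph] unfolding Dh_def S_def by argo
  qed
  finally show ?thesis .
qed

end

definition index_seqs :: "nat \<Rightarrow> nat \<Rightarrow> nat list set" where
  "index_seqs n t = {is. length is = t \<and> set is \<subseteq> {..<n}}"

lemma index_seqs_Suc: "index_seqs n (Suc t) = (\<lambda>(is, i). is @ [i]) ` (index_seqs n t \<times> {..<n})"
proof
  show "index_seqs n (Suc t) \<subseteq> (\<lambda>(is, i). is @ [i]) ` (index_seqs n t \<times> {..<n})"
  proof
    fix xs assume xs: "xs \<in> index_seqs n (Suc t)"
    then have "xs \<noteq> []" unfolding index_seqs_def by auto
    then have "xs = butlast xs @ [last xs]" "butlast xs \<in> index_seqs n t" "last xs < n"
      using xs last_in_set[of xs] unfolding index_seqs_def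
      by (auto dest: in_set_butlastD simp del: last_in_set)
    then show "xs \<in> (\<lambda>(is, i). is @ [i]) ` (index_seqs n t \<times> {..<n})"
      by (intro image_eqI[of _ _ "(butlast xs, last xs)"]) auto
  qed
qed (auto simp: index_seqs_def)

lemma sum_index_seqs_Suc:
  "(\<Sum>is\<in>index_seqs n (Suc t). G is) = (\<Sum>is\<in>index_seqs n t. \<Sum>i<n. G (is @ [i]))"
proof -
  have "inj_on (\<lambda>(is, i). is @ [i]) (index_seqs n t \<times> {..<n})"
    by (auto simp: inj_on_def)
  then show ?thesis
    unfolding index_seqs_Suc by (simp add: sum.reindex sum.cartesian_product split_def)
qed

lemma saga_run_snoc:
  "saga_run C h gh n gf eta x0 (is @ [i]) = saga_step C h gh n gf eta (saga_run C h gh n gf eta x0 is) i"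
  unfolding saga_run_def by simp

context bregman_saga
begin

lemma saga_run_in_interior:
  assumes x0: "x0 \<in> interior C"
  shows "fst (saga_run C h gh n gf eta x0 is) \<in> interior C"
proof (induction "is" rule: rev_induct)
  case Nil
  then show ?case using x0 by (simp add: saga_run_def)
next
  case (snoc i "is")
  then show ?case
    by (cases "saga_run C h gh n gf eta x0 is") (simp add: saga_run_snoc saga_step_eq mirror_in_interior)
qed

lemma expected_psi_Suc_le:
  assumes x0: "x0 \<in> interior C"
  shows "saga_expected_psi C h gh n f gf eta x0 xstar (Suc t)
    \<le> (1 - rho) * saga_expected_psi C h gh n f gf eta x0 xstar t"
proof -
  define P where "P is = psi (saga_run C h gh n gf eta x0 is)" for "is"
  have E: "saga_expected_psi C h gh n f gf eta x0 xstar t' = (\<Sum>is\<in>index_seqs n t'. P is) / real n ^ t'" for t'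
    unfolding saga_expected_psi_def P_def index_seqs_def ..
  have "(\<Sum>is\<in>index_seqs n (Suc t). P is) \<le> (\<Sum>is\<in>index_seqs n t. real n * (1 - rho) * P is)"
    unfolding sum_index_seqs_Suc
  proof (rule sum_mono)
    fix "is"
    obtain x ph where st: "saga_run C h gh n gf eta x0 is = (x, ph)" by fastforce
    then have "x \<in> interior C" using saga_run_in_interior[OF x0, of "is"] by simp
    then show "(\<Sum>i<n. P (is @ [i])) \<le> real n * (1 - rho) * P is"
      unfolding P_def saga_run_snoc st by (rule saga_one_step)
  qed
  then have "(\<Sum>is\<in>index_seqs n (Suc t). P is) / real n ^ Suc t
      \<le> real n * (1 - rho) * (\<Sum>is\<in>index_seqs n t. P is) / real n ^ Suc t"
    by (simp add: sum_distrib_left divide_right_mono)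
  also have "\<dots> = (1 - rho) * ((\<Sum>is\<in>index_seqs n t. P is) / real n ^ t)"
    using n by (simp add: field_simps)
  finally show ?thesis unfolding E .
qed

lemma expected_psi_le:
  assumes x0: "x0 \<in> interior C"
  shows "saga_expected_psi C h gh n f gf eta x0 xstar t
    \<le> (1 - rho) ^ t * saga_expected_psi C h gh n f gf eta x0 xstar 0"
proof (induction t)
  case (Suc t)
  have "0 \<le> 1 - rho" using rho_le_1 by simp
  then show ?case
    using order_trans[OF expected_psi_Suc_le[OF x0] mult_left_mono[OF Suc]] by (simp add: mult.assoc)
qed simp

end

theorem corollary2:
  fixes C :: "'a::euclidean_space set"
    and h :: "'a \<Rightarrow> ereal" and gh :: "'a \<Rightarrow> 'a"
    and n :: nat and f :: "nat \<Rightarrow> 'a \<Rightarrow> real" and gf :: "nat \<Rightarrow> 'a \<Rightarrow> 'a"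
    and L_rel mu_rel :: real and N :: "'a \<Rightarrow> real" and mu_h L_f :: real
    and x0 xstar :: 'a
  assumes C: "closed C" "convex C"
    and h_range: "\<forall>x. h x \<noteq> -\<infinity>"
    and h_fin: "\<forall>x\<in>interior C. h x \<noteq> \<infinity>"
    and h_grad: "\<forall>x\<in>interior C.
        ((\<lambda>y. real_of_ereal (h y)) has_derivative (\<lambda>v. gh x \<bullet> v)) (at x)"
    and h_C2: "\<exists>H :: 'a \<Rightarrow> 'a \<Rightarrow>\<^sub>L 'a. (\<forall>x\<in>interior C. (gh has_derivative blinfun_apply (H x)) (at x))
        \<and> continuous_on (interior C) H"
    and h_strict: "strict_convex_on (interior C) (\<lambda>x. real_of_ereal (h x))"
    and h_mirror: "\<forall>y. \<exists>!x. x \<in> C \<and> (\<forall>z\<in>C. h x - ereal (x \<bullet> y) \<le> h z - ereal (z \<bullet> y))"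
    and h_mirror_int: "\<forall>y x. x \<in> C \<and> (\<forall>z\<in>C. h x - ereal (x \<bullet> y) \<le> h z - ereal (z \<bullet> y))
        \<longrightarrow> x \<in> interior C"
    and n: "n \<ge> 1"
    and f_grad: "\<forall>i<n. \<forall>x. (f i has_derivative (\<lambda>v. gf i x \<bullet> v)) (at x)"
    and f_convex: "\<forall>i<n. convex_on UNIV (f i)"
    and rel_smooth: "\<forall>i<n. \<forall>x\<in>interior C. \<forall>y\<in>interior C.
        bregman (f i) (gf i) x y \<le> L_rel * bregman (\<lambda>x. real_of_ereal (h x)) gh x y"
    and rel_sc: "\<forall>x\<in>interior C. \<forall>y\<in>interior C.
        bregman (\<lambda>x. (\<Sum>i<n. f i x) / real n) (\<lambda>x. (1 / real n) *\<^sub>R (\<Sum>i<n. gf i x)) x y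
          \<ge> mu_rel * bregman (\<lambda>x. real_of_ereal (h x)) gh x y"
    and mu_rel: "mu_rel > 0"
    and xstar: "xstar \<in> interior C" "\<forall>x\<in>C. (\<Sum>i<n. f i xstar) / real n \<le> (\<Sum>i<n. f i x) / real n"
    and x0: "x0 \<in> interior C"
    and N: "is_norm N"
    and mu_h: "mu_h > 0"
    and h_sc: "\<forall>x\<in>interior C. \<forall>y\<in>interior C.
        real_of_ereal (h y) \<ge> real_of_ereal (h x) + gh x \<bullet> (y - x) + mu_h / 2 * (N (y - x))\<^sup>2"
    and L_f: "L_f > 0"
    and f_smooth: "\<forall>i<n. \<forall>x y. dual_norm N (gf i x - gf i y) \<le> L_f * N (x - y)"
  shows "\<forall>t. saga_expected_psi C h gh n f gf (mu_h / (8 * L_f)) x0 xstar t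
     \<le> (1 - min (mu_h * mu_rel / (8 * L_f)) (1 / (2 * real n))) ^ t
        * saga_expected_psi C h gh n f gf (mu_h / (8 * L_f)) x0 xstar 0"
proof -
  interpret bregman_saga C h gh N mu_h n f gf mu_rel L_f xstar
    using h_range h_fin h_grad h_mirror h_mirror_int N mu_h h_sc n f_grad f_convex rel_sc mu_rel
      xstar L_f f_smooth
    by unfold_locales auto
  show ?thesis using expected_psi_le[OF x0] unfolding eta_def rho_def by blast
qed

end
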